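(* Fix a token $\texttt{<x>}\in\mathsf{Voc}$, an integer $\ell\ge0$, a length $T\ge1$, and $\varepsilon\in(0,1)$. There exist matrices $\mathbf{K},\mathbf{Q}\in\mathbb{R}^{(2d_\mathsf{PE})\times d}$ such that for every sequence $(\mathbf{h}_1,\dots,\mathbf{h}_T)$ satisfying (i) $\mathbf{h}_i=\sum_{v\in\mathsf{Voc}}\lambda_{i,v}\mathbf{u}_v$ with $\lambda_{i,v}\ge0$ and $\sum_{v}\lambda_{i,v}^2=1$ for all $i\in[T]$, (ii) $\langle\mathbf{u}_{\texttt{<x>}},\mathbf{h}_i\rangle\in\{0,1\}$ for all $i$, and (iii) $\langle\mathbf{u}_{\texttt{<x>}},\mathbf{h}_i\rangle=0$ for all $i\le\ell$, it holds for every $i\in[T]$: if $\langle\mathbf{h}_i,\mathbf{u}_{\texttt{<x>}}\rangle=1$ then $s_{i,i-\ell}>1-\varepsilon$, and otherwise $s_{i,1}>1-\varepsilon$. Here $s_{i,\cdot}=\mathsf{SoftMax}(\langle\mathbf{q}_i,\mathbf{k}_1\rangle,\dots,\langle\mathbf{q}_i,\mathbf{k}_i\rangle)$ with $\mathbf{q}_j=\mathbf{Q}(\mathbf{h}_j+\mathbf{p}_j)$, $\mathbf{k}_j=\mathbf{K}(\mathbf{h}_j+\mathbf{p}_j)$.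
   Context: Vocabulary $\mathsf{Voc}=\{1,\dots,V\}$. Embedding dimension $d=3d_\mathsf{TE}+d_\mathsf{PE}$ with $d_\mathsf{PE}$ even. Each token $v$ has embedding $\mathbf{u}_v\in\mathbb{R}^d$ whose coordinates beyond the first $d_\mathsf{TE}$ are zero, and the vectors formed by the first $d_\mathsf{TE}$ coordinates of the $\mathbf{u}_v$ are orthonormal over $v\in\mathsf{Voc}$. Sinusoidal positional encoding: $\mathbf{p}_i\in\mathbb{R}^d$ is zero on its first $3d_\mathsf{TE}$ coordinates and its last $d_\mathsf{PE}$ coordinates $\bar{\mathbf{p}}_i$ are $\bar p_{i,2j-1}=\cos(iM^{-2j/d_\mathsf{PE}})$, $\bar p_{i,2j}=\sin(iM^{-2j/d_\mathsf{PE}})$, $j=1,\dots,d_\mathsf{PE}/2$, where $M>0$ is a fixed large integer. $\mathsf{SoftMax}(\boldsymbol{x})_j=e^{x_j}/\sum_k e^{x_k}$. *)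

theory Defs
  imports Complex_Main "Jordan_Normal_Form.Matrix"
begin

text \<open>Coordinates are 0-based: paper coordinate c+1 is Isabelle coordinate c.
  Embedding dimension d = 3*dTE + dPE.\<close>

definition pos_enc :: "nat \<Rightarrow> nat \<Rightarrow> nat \<Rightarrow> nat \<Rightarrow> real vec" where
  "pos_enc dTE dPE M i = vec (3*dTE+dPE) (\<lambda>c.
     if c < 3*dTE then 0
     else (let r = c - 3*dTE; j = r div 2 + 1;
               w = real M powr (-(2 * real j) / real dPE) in
           if even r then cos (real i * w) else sin (real i * w)))"

definition SoftMax :: "(nat \<Rightarrow> real) \<Rightarrow> nat \<Rightarrow> nat \<Rightarrow> real" where
  "SoftMax x n j = exp (x j) / (\<Sum>k=1..n. exp (x k))"

end

theory Submission
  imports Defs "HOL-Computational_Algebra.Polynomial"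
begin

text \<open>
  The key matrix reads off the lowest-frequency pair (cos (j/M), sin (j/M)) of the positional
  encoding of position j. The query of position i is B \<psi> (cos (1/M), sin (1/M)) plus g times the
  positional pair of i rotated back by l steps, where \<psi> is the total weight that h_i puts on
  tokens other than x. Thus the attention score is B \<psi> cos ((j - 1)/M) + g cos ((i - l - j)/M).
  Since \<pi> is irrational (Niven's argument), cos (n/M) < 1 for 0 < |n| \<le> T, which gives a uniform
  gap \<delta>. If h_i = u_x then \<psi> = 0 and the score peaks at j = i - l with margin g \<delta>; otherwise
  \<psi> \<ge> 1 and it peaks at j = 1 with margin at least B \<delta> - 2 g. Margins above ln (T/\<epsilon>) put
  SoftMax mass above 1 - \<epsilon> on the peak.
\<close>

section \<open>Irrationality of \<pi>\<close>

lemma higher_pderiv_eq_0: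
  fixes p :: "'a::idom poly"
  assumes "degree p < k"
  shows "(pderiv ^^ k) p = 0"
  using assms by (intro poly_eqI) (simp add: coeff_higher_pderiv coeff_eq_0)

lemma poly_higher_pderiv_at_0:
  fixes p :: "'a::{idom,ring_char_0} poly"
  shows "poly ((pderiv ^^ k) p) 0 = fact k * coeff p k"
  by (simp add: poly_0_coeff_0 coeff_higher_pderiv pochhammer_fact)

lemma higher_pderiv_pcompose_reflect:
  fixes p :: "'a::idom poly"
  shows "(pderiv ^^ k) (p \<circ>\<^sub>p [:c, -1:]) = smult ((-1) ^ k) ((pderiv ^^ k) p \<circ>\<^sub>p [:c, -1:])"
  by (induction k) (simp_all add: pderiv_smult pderiv_pcompose pderiv_pCons)

lemma Ints_coeff_power:
  fixes p :: "'a::idom poly"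
  assumes "\<forall>k. coeff p k \<in> \<int>"
  shows "\<forall>k. coeff (p ^ n) k \<in> \<int>"
  by (induction n) (auto simp: coeff_1 coeff_mult assms intro!: Ints_sum Ints_mult)

lemma exists_power_lt_fact:
  fixes C c :: real
  shows "\<exists>N. C * c ^ N < fact N"
proof -
  have "(\<lambda>n. c ^ n / fact n) \<longlonglongrightarrow> 0"
    using summable_LIMSEQ_zero[OF summable_exp] by (simp add: field_simps)
  then have "(\<lambda>n. C * (c ^ n / fact n)) \<longlonglongrightarrow> 0"
    by (rule tendsto_mult_right_zero)
  then have "\<forall>\<^sub>F n in sequentially. C * (c ^ n / fact n) < 1"
    by (rule order_tendstoD) simp
  then obtain N where "C * (c ^ N / fact N) < 1"
    by (auto simp: eventually_sequentially)
  then show ?thesis by (auto simp: field_simps)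
qed

definition alt_even_pderivs :: "'a::idom poly \<Rightarrow> nat \<Rightarrow> 'a poly" where
  "alt_even_pderivs f n = (\<Sum>k\<le>n. smult ((-1) ^ k) ((pderiv ^^ (2 * k)) f))"

lemma higher_pderiv_2_add_alt_even_pderivs:
  fixes f :: "'a::{idom,ring_char_0} poly"
  assumes "degree f < 2 * Suc n"
  shows "(pderiv ^^ 2) (alt_even_pderivs f n) + alt_even_pderivs f n = f"
proof -
  define g where "g k = smult ((-1) ^ k) ((pderiv ^^ (2 * k)) f)" for k
  have "(pderiv ^^ 2) (g k) = - g (Suc k)" for k
    by (simp add: g_def higher_pderiv_smult pderiv_smult numeral_2_eq_2)
  then have "(pderiv ^^ 2) (alt_even_pderivs f n) = (\<Sum>k\<le>n. - g (Suc k))"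
    by (simp add: alt_even_pderivs_def higher_pderiv_sum flip: g_def)
  then have "(pderiv ^^ 2) (alt_even_pderivs f n) + alt_even_pderivs f n = (\<Sum>k\<le>n. g k - g (Suc k))"
    by (simp add: alt_even_pderivs_def sum_subtractf sum_negf flip: g_def)
  also have "\<dots> = g 0 - g (Suc n)"
    by (rule sum_telescope)
  also have "g (Suc n) = 0"
    using assms higher_pderiv_eq_0[of f "2 * Suc n"] by (simp add: g_def)
  finally show ?thesis by (simp add: g_def)
qed

lemma poly_alt_even_pderivs_reflect:
  fixes f :: "'a::idom poly"
  assumes "f \<circ>\<^sub>p [:c, -1:] = f"
  shows "poly (alt_even_pderivs f n) c = poly (alt_even_pderivs f n) 0"
proof -
  have "poly ((pderiv ^^ (2 * k)) f) c = poly ((pderiv ^^ (2 * k)) f) 0" for k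
    using arg_cong[OF higher_pderiv_pcompose_reflect[of "2 * k" f c], of "\<lambda>p. poly p 0"]
    by (simp add: assms poly_pcompose)
  then show ?thesis
    by (simp add: alt_even_pderivs_def poly_sum)
qed

lemma poly_alt_even_pderivs_at_0_div_fact:
  fixes f :: "real poly"
  assumes Ints: "\<forall>k. coeff f k \<in> \<int>" and low: "\<forall>k<N. coeff f k = 0"
  shows "poly (alt_even_pderivs f n) 0 / fact N \<in> \<int>"
proof -
  have div_fact: "fact k * coeff f k / fact N \<in> \<int>" for k
  proof (cases "k < N")
    case False
    then obtain c :: nat where "fact k = fact N * c"
      using fact_dvd[of N k] by (auto elim!: dvdE)
    then have "(fact k :: real) = fact N * of_nat c"
      by (metis of_nat_fact of_nat_mult)
    then show ?thesis using Ints by simp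
  qed (simp add: low)
  have summand: "poly (smult ((-1) ^ k) ((pderiv ^^ (2 * k)) f)) 0 / fact N
      = (-1) ^ k * (fact (2 * k) * coeff f (2 * k) / fact N)" for k
    by (simp add: poly_higher_pderiv_at_0)
  then show ?thesis
    unfolding alt_even_pderivs_def poly_sum sum_divide_distrib
    by (intro Ints_sum, unfold summand) (intro Ints_mult Ints_power Ints_minus Ints_1 div_fact)
qed

lemma poly_sin_mean_value:
  fixes F f :: "real poly"
  assumes "(pderiv ^^ 2) F + F = f"
  shows "\<exists>z. 0 < z \<and> z < pi \<and> poly F pi + poly F 0 = pi * (poly f z * sin z)"
proof -
  define G where "G x = poly (pderiv F) x * sin x - poly F x * cos x" for x
  have "(G has_real_derivative poly f x * sin x) (at x)" for x
  proof -
    have "(G has_real_derivative poly (pderiv (pderiv F)) x * sin x + poly (pderiv F) x * cos x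
           - (poly (pderiv F) x * cos x - poly F x * sin x)) (at x)"
      unfolding G_def by (auto intro!: derivative_eq_intros)
    then show ?thesis
      by (simp flip: assms add: algebra_simps numeral_2_eq_2)
  qed
  then obtain z where "0 < z" "z < pi" "G pi - G 0 = (pi - 0) * (poly f z * sin z)"
    using MVT2[of 0 pi G "\<lambda>x. poly f x * sin x"] by auto
  then show ?thesis by (auto simp: G_def)
qed

definition niven_poly :: "real \<Rightarrow> real \<Rightarrow> nat \<Rightarrow> real poly" where
  "niven_poly a b N = monom 1 N * [:a, -b:] ^ N"

lemma niven_poly_reflect:
  fixes a b c :: real
  assumes "a = b * c"
  shows "niven_poly a b N \<circ>\<^sub>p [:c, -1:] = niven_poly a b N"
proof (rule poly_eq_poly_eq_iff[THEN iffD1], rule ext)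
  fix x
  have "(c - x) * (a - (c - x) * b) = x * (a - x * b)"
    using assms by (simp add: algebra_simps)
  then show "poly (niven_poly a b N \<circ>\<^sub>p [:c, -1:]) x = poly (niven_poly a b N) x"
    by (simp add: niven_poly_def poly_pcompose poly_monom flip: power_mult_distrib)
qed

lemma niven_poly_Ints_coeff:
  "\<forall>k. coeff (niven_poly (real m) (real n) N) k \<in> \<int>"
  "\<forall>k<N. coeff (niven_poly (real m) (real n) N) k = 0"
proof -
  have "\<forall>k. coeff [:real m, - real n:] k \<in> \<int>"
    by (auto simp: coeff_pCons split: nat.splits)
  then show "\<forall>k. coeff (niven_poly (real m) (real n) N) k \<in> \<int>" "\<forall>k<N. coeff (niven_poly (real m) (real n) N) k = 0"
    using Ints_coeff_power by (auto simp: niven_poly_def coeff_monom_mult)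
qed

lemma degree_niven_poly: "degree (niven_poly a b N) \<le> 2 * N"
  unfolding niven_poly_def using degree_mult_le[of "monom 1 N" "[:a, -b:] ^ N"]
    degree_power_le[of "[:a, -b:]" N] degree_monom_le[of "1::real" N] by (auto split: if_splits)

lemma niven_poly_bounds:
  fixes a b c z :: real
  assumes "a = b * c" "0 < b" "0 < z" "z < c"
  shows "0 < poly (niven_poly a b N) z" "poly (niven_poly a b N) z \<le> (c * a) ^ N"
proof -
  have poly_eq: "poly (niven_poly a b N) z = (z * (a - z * b)) ^ N"
    by (simp add: niven_poly_def poly_monom power_mult_distrib)
  have "0 < a - z * b" "a - z * b \<le> a"
    using assms by (simp_all add: algebra_simps)
  then show "0 < poly (niven_poly a b N) z" "poly (niven_poly a b N) z \<le> (c * a) ^ N"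
    unfolding poly_eq using assms by (auto intro!: power_mono mult_mono)
qed

theorem pi_not_in_Rats: "pi \<notin> \<rat>"
proof
  assume "pi \<in> \<rat>"
  then obtain m n :: nat where "n \<noteq> 0" "\<bar>pi\<bar> = real m / real n"
    by (rule Rats_abs_nat_div_natE)
  then have a_eq: "real m = real n * pi" and n_pos: "0 < real n"
    by (simp_all add: field_simps)
  obtain N where N: "pi * (pi * real m) ^ N < fact N"
    using exists_power_lt_fact by blast
  define f where "f = niven_poly (real m) (real n) N"
  define F where "F = alt_even_pderivs f N"
  have "(pderiv ^^ 2) F + F = f"
    using degree_niven_poly[of "real m" "real n" N]
    unfolding F_def f_def by (intro higher_pderiv_2_add_alt_even_pderivs) simp
  then obtain z where z: "0 < z" "z < pi" and F_sum: "poly F pi + poly F 0 = pi * (poly f z * sin z)"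
    using poly_sin_mean_value by blast
  have "poly F pi = poly F 0"
    unfolding F_def f_def using a_eq by (intro poly_alt_even_pderivs_reflect niven_poly_reflect)
  with F_sum have F0: "2 * poly F 0 = pi * (poly f z * sin z)"
    by simp
  obtain w where w: "poly F 0 = of_int w * fact N"
    using poly_alt_even_pderivs_at_0_div_fact[OF niven_poly_Ints_coeff, of m n N N]
    by (auto simp: F_def f_def field_simps elim!: Ints_cases)
  have fz: "0 < poly f z" "poly f z \<le> (pi * real m) ^ N"
    unfolding f_def using niven_poly_bounds[OF a_eq n_pos z] by auto
  have sin_z: "0 < sin z"
    using z by (simp add: sin_gt_zero)
  have "0 < poly F 0"
    using F0 fz sin_z by (smt (verit) mult_pos_pos pi_gt_zero)
  have "poly f z * sin z \<le> (pi * real m) ^ N * 1"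
    using fz sin_z by (intro mult_mono) auto
  then have "2 * poly F 0 \<le> pi * (pi * real m) ^ N"
    unfolding F0 by simp
  moreover have "fact N \<le> poly F 0"
    using \<open>0 < poly F 0\<close> unfolding w by (simp add: zero_less_mult_iff)
  ultimately show False
    using N fact_gt_zero[of N, where 'a = real] by linarith
qed

section \<open>A uniform gap for cosines of rational multiples\<close>

lemma cos_neq_1_of_Rats:
  fixes q :: real
  assumes "q \<in> \<rat>" "q \<noteq> 0"
  shows "cos q \<noteq> 1"
proof
  assume "cos q = 1"
  then obtain k :: int where k: "q = of_int k * 2 * pi"
    by (auto simp: cos_one_2pi_int)
  with assms have "pi = q / (2 * of_int k)"
    by (auto simp: field_simps)
  also have "\<dots> \<in> \<rat>"
    using assms(1) by (intro Rats_divide Rats_mult Rats_of_int) simp_all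
  finally show False
    using pi_not_in_Rats by simp
qed

definition cos_gap :: "nat \<Rightarrow> real \<Rightarrow> real \<Rightarrow> bool" where
  "cos_gap T \<theta> \<delta> \<longleftrightarrow> (\<forall>n::int. n \<noteq> 0 \<and> \<bar>n\<bar> \<le> int T \<longrightarrow> cos (of_int n * \<theta>) \<le> 1 - \<delta>)"

lemma exists_cos_gap:
  fixes \<theta> :: real
  assumes "\<theta> \<in> \<rat>" "\<theta> \<noteq> 0"
  shows "\<exists>\<delta>>0. cos_gap T \<theta> \<delta>"
proof -
  have "\<forall>\<^sub>F \<delta> in at_right 0. \<forall>k\<in>{1..T}. cos (real k * \<theta>) \<le> 1 - \<delta>"
  proof (intro eventually_ball_finite ballI)
    fix k assume "k \<in> {1..T}"
    with assms have "real k * \<theta> \<in> \<rat>" "real k * \<theta> \<noteq> 0"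
      by auto
    then have "cos (real k * \<theta>) < 1"
      using cos_neq_1_of_Rats cos_le_one less_le by blast
    then have "\<forall>\<^sub>F \<delta> in at_right 0. \<delta> < 1 - cos (real k * \<theta>)"
      by (intro order_tendstoD(2)[OF tendsto_ident_at]) simp
    then show "\<forall>\<^sub>F \<delta> in at_right 0. cos (real k * \<theta>) \<le> 1 - \<delta>"
      by eventually_elim simp
  qed simp
  with eventually_at_right_less have "\<forall>\<^sub>F \<delta> in at_right 0. 0 < \<delta> \<and> (\<forall>k\<in>{1..T}. cos (real k * \<theta>) \<le> 1 - \<delta>)"
    by (rule eventually_conj)
  from eventually_happens'[OF trivial_limit_at_right_real this]
  obtain \<delta> :: real where "0 < \<delta>" and \<delta>: "\<forall>k\<in>{1..T}. cos (real k * \<theta>) \<le> 1 - \<delta>"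
    by (elim exE conjE)
  have "cos (of_int n * \<theta>) \<le> 1 - \<delta>" if "n \<noteq> 0" "\<bar>n\<bar> \<le> int T" for n :: int
  proof -
    have "of_int n * \<theta> = real (nat \<bar>n\<bar>) * \<theta> \<or> of_int n * \<theta> = - (real (nat \<bar>n\<bar>) * \<theta>)"
      by (cases "0 \<le> n") simp_all
    then have "cos (of_int n * \<theta>) = cos (real (nat \<bar>n\<bar>) * \<theta>)"
      by (metis cos_minus)
    moreover have "nat \<bar>n\<bar> \<in> {1..T}"
      using that by auto
    ultimately show ?thesis
      using \<delta> by metis
  qed
  with \<open>0 < \<delta>\<close> show ?thesis
    unfolding cos_gap_def by blast
qed

section \<open>Concentration of SoftMax\<close>

lemma SoftMax_gt_of_margin:
  fixes s :: "nat \<Rightarrow> real"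
  assumes "j0 \<in> {1..n}" and margin: "\<forall>j\<in>{1..n}. j \<noteq> j0 \<longrightarrow> s j + D \<le> s j0"
    and "real n * exp (- D) < eps"
  shows "1 - eps < SoftMax s n j0"
proof -
  define t where "t = real n * exp (- D)"
  have "exp (s j) \<le> (if j = j0 then exp (s j0) else 0) + exp (s j0) * exp (- D)" if "j \<in> {1..n}" for j
    using margin that by (auto simp flip: exp_add)
  then have "(\<Sum>j=1..n. exp (s j)) \<le> (\<Sum>j=1..n. (if j = j0 then exp (s j0) else 0) + exp (s j0) * exp (- D))"
    by (rule sum_mono)
  also have "\<dots> = exp (s j0) * (1 + t)"
    using assms(1) by (simp add: sum.distrib t_def algebra_simps)
  moreover have "0 < (\<Sum>j=1..n. exp (s j))" and t0: "0 \<le> t"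
    using assms(1) by (auto simp: t_def intro: sum_pos)
  ultimately have "exp (s j0) / (exp (s j0) * (1 + t)) \<le> SoftMax s n j0"
    unfolding SoftMax_def by (intro divide_left_mono) auto
  then have "1 / (1 + t) \<le> SoftMax s n j0"
    by simp
  moreover have "1 - t \<le> 1 / (1 + t)"
    using t0 by (simp add: le_divide_eq algebra_simps)
  ultimately show ?thesis
    using assms(3) by (simp add: t_def)
qed

lemma SoftMax_peak_at_shift:
  fixes s :: "nat \<Rightarrow> real"
  assumes gap: "cos_gap T \<theta> \<delta>"
    and "0 \<le> g" "g * \<delta> = L" "real T * exp (- L) < eps" "l < i" "i \<le> T"
    and s: "\<forall>j\<in>{1..i}. s j = B * \<psi> * cos ((real j - 1) * \<theta>) + g * cos ((real i - real l - real j) * \<theta>)"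
    and "\<psi> = 0"
  shows "1 - eps < SoftMax s i (i - l)"
proof (rule SoftMax_gt_of_margin)
  show peak: "i - l \<in> {1..i}"
    using \<open>l < i\<close> by auto
  show "real i * exp (- L) < eps"
    using assms(4,6) by (smt (verit) exp_gt_zero mult_right_mono of_nat_mono)
  show "\<forall>j\<in>{1..i}. j \<noteq> i - l \<longrightarrow> s j + L \<le> s (i - l)"
  proof (intro ballI impI)
    fix j assume j: "j \<in> {1..i}" "j \<noteq> i - l"
    have "int i - int l - int j \<noteq> 0 \<and> \<bar>int i - int l - int j\<bar> \<le> int T"
      using j \<open>l < i\<close> \<open>i \<le> T\<close> by auto
    then have "cos (of_int (int i - int l - int j) * \<theta>) \<le> 1 - \<delta>"
      by (rule gap[unfolded cos_gap_def, rule_format])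
    then have "cos ((real i - real l - real j) * \<theta>) \<le> 1 - \<delta>"
      by simp
    then have "g * cos ((real i - real l - real j) * \<theta>) \<le> g * (1 - \<delta>)"
      using \<open>0 \<le> g\<close> by (intro mult_left_mono) auto
    moreover have "s (i - l) = g"
      using s peak \<open>\<psi> = 0\<close> \<open>l < i\<close> by simp
    ultimately show "s j + L \<le> s (i - l)"
      using s j \<open>\<psi> = 0\<close> \<open>g * \<delta> = L\<close> by (simp add: algebra_simps)
  qed
qed

lemma SoftMax_peak_at_first:
  fixes s :: "nat \<Rightarrow> real"
  assumes gap: "cos_gap T \<theta> \<delta>"
    and "0 < \<delta>" "0 \<le> g" "0 \<le> B" "B * \<delta> = L + 2 * g" "real T * exp (- L) < eps" "i \<in> {1..T}"
    and s: "\<forall>j\<in>{1..i}. s j = B * \<psi> * cos ((real j - 1) * \<theta>) + g * cos ((real i - real l - real j) * \<theta>)"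
    and "1 \<le> \<psi>"
  shows "1 - eps < SoftMax s i 1"
proof (rule SoftMax_gt_of_margin)
  show peak: "1 \<in> {1..i}"
    using \<open>i \<in> {1..T}\<close> by auto
  show "real i * exp (- L) < eps"
    using assms(6,7) by (smt (verit) atLeastAtMost_iff exp_gt_zero mult_right_mono of_nat_mono)
  show "\<forall>j\<in>{1..i}. j \<noteq> 1 \<longrightarrow> s j + L \<le> s 1"
  proof (intro ballI impI)
    fix j assume j: "j \<in> {1..i}" "j \<noteq> 1"
    have "int j - 1 \<noteq> 0 \<and> \<bar>int j - 1\<bar> \<le> int T"
      using j \<open>i \<in> {1..T}\<close> by auto
    then have "cos (of_int (int j - 1) * \<theta>) \<le> 1 - \<delta>"
      by (rule gap[unfolded cos_gap_def, rule_format])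
    then have "cos ((real j - 1) * \<theta>) \<le> 1 - \<delta>"
      by simp
    then have "B * \<psi> * cos ((real j - 1) * \<theta>) \<le> B * \<psi> * (1 - \<delta>)"
      using \<open>0 \<le> B\<close> \<open>1 \<le> \<psi>\<close> by (intro mult_left_mono) auto
    moreover have "g * cos ((real i - real l - real j) * \<theta>) \<le> g * 1"
      "g * (- 1) \<le> g * cos ((real i - real l - 1) * \<theta>)"
      using \<open>0 \<le> g\<close> by (intro mult_left_mono; simp)+
    moreover have "L + 2 * g \<le> B * \<delta> * \<psi>"
      using \<open>1 \<le> \<psi>\<close> \<open>0 < \<delta>\<close> \<open>0 \<le> B\<close> \<open>B * \<delta> = L + 2 * g\<close>
      by (metis mult_left_mono mult.right_neutral zero_le_mult_iff less_imp_le)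
    ultimately show "s j + L \<le> s 1"
      using s j peak by (simp add: algebra_simps)
  qed
qed

lemma exists_SoftMax_margin_params:
  fixes \<delta> eps :: real
  assumes "0 < \<delta>" "0 < eps" "eps < 1" "1 \<le> T"
  shows "\<exists>L g B. real T * exp (- L) < eps \<and> 0 \<le> g \<and> g * \<delta> = L \<and> 0 \<le> B \<and> B * \<delta> = L + 2 * g"
proof -
  define L where "L = ln (real T / eps) + 1"
  have "exp (- L) = exp (- ln (real T / eps)) * exp (- 1)"
    by (simp add: L_def flip: exp_add)
  also have "exp (- ln (real T / eps)) = eps / real T"
    using assms exp_ln[of "real T / eps"] by (simp add: exp_minus)
  finally have "real T * exp (- L) = eps * exp (- 1)"
    using assms by simp
  also have "\<dots> < eps"
    using assms(2) by simp
  finally have "real T * exp (- L) < eps" .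
  moreover have "0 < L"
    using assms by (simp add: L_def add_nonneg_pos)
  ultimately show ?thesis
    using assms(1) by (intro exI[of _ L] exI[of _ "L / \<delta>"] exI[of _ "(L + 2 * (L / \<delta>)) / \<delta>"]) auto
qed

section \<open>The attention head\<close>

definition two_row_mat :: "nat \<Rightarrow> nat \<Rightarrow> 'a::zero vec \<Rightarrow> 'a vec \<Rightarrow> 'a mat" where
  "two_row_mat n m r0 r1 = mat\<^sub>r n m (\<lambda>r. if r = 0 then r0 else if r = 1 then r1 else 0\<^sub>v m)"

lemma two_row_mat_carrier [simp]: "two_row_mat n m r0 r1 \<in> carrier_mat n m"
  by (simp add: two_row_mat_def)

lemma scalar_prod_two_row_mat_mult_vec:
  fixes q0 q1 k0 k1 :: "'a::comm_semiring_1 vec"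
  assumes "2 \<le> n" "q0 \<in> carrier_vec m" "q1 \<in> carrier_vec m" "k0 \<in> carrier_vec m" "k1 \<in> carrier_vec m"
    and "a \<in> carrier_vec m" "b \<in> carrier_vec m"
  shows "(two_row_mat n m q0 q1 *\<^sub>v a) \<bullet> (two_row_mat n m k0 k1 *\<^sub>v b) = (q0 \<bullet> a) * (k0 \<bullet> b) + (q1 \<bullet> a) * (k1 \<bullet> b)"
proof -
  have "(two_row_mat n m q0 q1 *\<^sub>v a) \<bullet> (two_row_mat n m k0 k1 *\<^sub>v b)
      = (\<Sum>r\<in>{0..<n}. (two_row_mat n m q0 q1 *\<^sub>v a) $ r * (two_row_mat n m k0 k1 *\<^sub>v b) $ r)"
    by (simp add: scalar_prod_def two_row_mat_def)
  also have "\<dots> = (\<Sum>r\<in>{0..<2}. (two_row_mat n m q0 q1 *\<^sub>v a) $ r * (two_row_mat n m k0 k1 *\<^sub>v b) $ r)"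
    using assms by (intro sum.mono_neutral_right) (auto simp: two_row_mat_def)
  also have "\<dots> = (q0 \<bullet> a) * (k0 \<bullet> b) + (q1 \<bullet> a) * (k1 \<bullet> b)"
    using assms by (simp add: two_row_mat_def numeral_2_eq_2)
  finally show ?thesis .
qed

definition key_mat :: "nat \<Rightarrow> nat \<Rightarrow> real mat" where
  "key_mat n m = two_row_mat n m (unit_vec m (m - 2)) (unit_vec m (m - 1))"

definition query_mat :: "nat \<Rightarrow> nat \<Rightarrow> real vec \<Rightarrow> real \<Rightarrow> real \<Rightarrow> real \<Rightarrow> real \<Rightarrow> real mat" where
  "query_mat n m w B g \<theta> \<phi> = two_row_mat n m
     (B * cos \<theta> \<cdot>\<^sub>v w + g * cos \<phi> \<cdot>\<^sub>v unit_vec m (m - 2) + g * sin \<phi> \<cdot>\<^sub>v unit_vec m (m - 1))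
     (B * sin \<theta> \<cdot>\<^sub>v w + (- g * sin \<phi>) \<cdot>\<^sub>v unit_vec m (m - 2) + g * cos \<phi> \<cdot>\<^sub>v unit_vec m (m - 1))"

lemma query_key_scalar_prod:
  assumes "2 \<le> n" "2 \<le> m" "w \<in> carrier_vec m" "a \<in> carrier_vec m" "b \<in> carrier_vec m"
    and "a $ (m - 2) = cos \<alpha>" "a $ (m - 1) = sin \<alpha>" "b $ (m - 2) = cos \<beta>" "b $ (m - 1) = sin \<beta>"
  shows "(query_mat n m w B g \<theta> \<phi> *\<^sub>v a) \<bullet> (key_mat n m *\<^sub>v b)
      = B * (w \<bullet> a) * cos (\<beta> - \<theta>) + g * cos (\<alpha> - \<phi> - \<beta>)"
proof -
  have "(query_mat n m w B g \<theta> \<phi> *\<^sub>v a) \<bullet> (key_mat n m *\<^sub>v b)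
      = (B * cos \<theta> * (w \<bullet> a) + g * cos \<phi> * cos \<alpha> + g * sin \<phi> * sin \<alpha>) * cos \<beta>
      + (B * sin \<theta> * (w \<bullet> a) - g * sin \<phi> * cos \<alpha> + g * cos \<phi> * sin \<alpha>) * sin \<beta>"
    using assms unfolding query_mat_def key_mat_def
    by (simp add: scalar_prod_two_row_mat_mult_vec add_scalar_prod_distrib[of _ m] algebra_simps)
  also have "\<dots> = B * (w \<bullet> a) * cos (\<beta> - \<theta>) + g * cos (\<alpha> - \<phi> - \<beta>)"
    by (simp only: cos_diff sin_diff) (simp add: algebra_simps)
  finally show ?thesis .
qed

lemma pos_enc_carrier [simp]: "pos_enc dTE dPE M i \<in> carrier_vec (3 * dTE + dPE)"
  unfolding pos_enc_def by (rule vec_carrier)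

lemma dim_vec_pos_enc [simp]: "dim_vec (pos_enc dTE dPE M i) = 3 * dTE + dPE"
  using pos_enc_carrier by (rule carrier_vecD)

lemma pos_enc_token_coord: "c < 3 * dTE \<Longrightarrow> pos_enc dTE dPE M i $ c = 0"
  by (simp add: pos_enc_def)

lemma pos_enc_lowest_frequency:
  assumes "even dPE" "0 < dPE"
  shows "pos_enc dTE dPE M i $ (3 * dTE + dPE - 2) = cos (real i / real M)"
    and "pos_enc dTE dPE M i $ (3 * dTE + dPE - 1) = sin (real i / real M)"
proof -
  obtain k where k: "dPE = 2 * k" "0 < k"
    using assms by (auto elim: evenE)
  then have "real M powr (- (2 * real k) / real dPE) = 1 / real M"
    by (simp add: powr_minus_divide)
  moreover have "3 * dTE + dPE - 2 - 3 * dTE = 2 * (k - 1)" "3 * dTE + dPE - 1 - 3 * dTE = 2 * (k - 1) + 1"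
    using k by auto
  ultimately show "pos_enc dTE dPE M i $ (3 * dTE + dPE - 2) = cos (real i / real M)"
    and "pos_enc dTE dPE M i $ (3 * dTE + dPE - 1) = sin (real i / real M)"
    using k by (simp_all add: pos_enc_def Let_def)
qed

lemma sum_ge_1_of_sum_squares_eq_1:
  fixes f :: "'a \<Rightarrow> real"
  assumes "finite A" "\<forall>v\<in>A. 0 \<le> f v" "(\<Sum>v\<in>A. f v ^ 2) = 1"
  shows "1 \<le> (\<Sum>v\<in>A. f v)"
proof -
  have "f v ^ 2 \<le> f v" if "v \<in> A" for v
  proof -
    have "f v ^ 2 \<le> 1"
      using assms that by (metis member_le_sum zero_le_power2)
    then have "f v \<le> 1"
      using power2_le_imp_le[of "f v" 1] by simp
    then show ?thesis
      using assms(2) that mult_left_mono[of "f v" 1 "f v"] by (simp add: power2_eq_square)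
  qed
  then have "(\<Sum>v\<in>A. f v ^ 2) \<le> (\<Sum>v\<in>A. f v)"
    by (rule sum_mono)
  with assms(3) show ?thesis
    by simp
qed

lemma sum_others_of_sum_squares_eq_1:
  fixes lam :: "'a \<Rightarrow> real"
  assumes "finite A" "x \<in> A" "\<forall>v\<in>A. 0 \<le> lam v" "(\<Sum>v\<in>A. lam v ^ 2) = 1"
  shows "lam x = 1 \<Longrightarrow> (\<Sum>v\<in>A - {x}. lam v) = 0"
    and "lam x = 0 \<Longrightarrow> 1 \<le> (\<Sum>v\<in>A - {x}. lam v)"
proof -
  have others: "(\<Sum>v\<in>A - {x}. lam v ^ 2) = 1 - lam x ^ 2"
    using assms by (simp add: sum.remove)
  show "(\<Sum>v\<in>A - {x}. lam v) = 0" if "lam x = 1"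
  proof -
    have "\<forall>v\<in>A - {x}. lam v ^ 2 = 0"
      using others that assms(1,3) sum_nonneg_eq_0_iff[of "A - {x}" "\<lambda>v. lam v ^ 2"] by simp
    then show ?thesis
      by simp
  qed
  show "1 \<le> (\<Sum>v\<in>A - {x}. lam v)" if "lam x = 0"
    using others that assms by (intro sum_ge_1_of_sum_squares_eq_1) auto
qed

locale token_embedding =
  fixes V dTE dPE :: nat and u :: "nat \<Rightarrow> real vec"
  assumes u_carrier: "\<forall>v\<in>{1..V}. u v \<in> carrier_vec (3 * dTE + dPE)"
    and u_vanishes: "\<forall>v\<in>{1..V}. \<forall>c. dTE \<le> c \<and> c < 3 * dTE + dPE \<longrightarrow> u v $ c = 0"
    and u_orthonormal: "\<forall>v\<in>{1..V}. \<forall>w\<in>{1..V}. (\<Sum>c<dTE. u v $ c * u w $ c) = (if v = w then 1 else 0)"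
begin

definition mixture :: "(nat \<Rightarrow> real) \<Rightarrow> real vec" where
  "mixture lam = vec (3 * dTE + dPE) (\<lambda>c. \<Sum>v=1..V. lam v * u v $ c)"

definition token_sum :: "nat set \<Rightarrow> real vec" where
  "token_sum S = vec (3 * dTE + dPE) (\<lambda>c. \<Sum>v\<in>S. u v $ c)"

lemma mixture_carrier [simp]: "mixture lam \<in> carrier_vec (3 * dTE + dPE)"
  by (simp add: mixture_def)

lemma token_sum_carrier [simp]: "token_sum S \<in> carrier_vec (3 * dTE + dPE)"
  by (simp add: token_sum_def)

lemma mixture_vanishes: "dTE \<le> c \<Longrightarrow> c < 3 * dTE + dPE \<Longrightarrow> mixture lam $ c = 0"
  using u_vanishes by (simp add: mixture_def)

lemma token_scalar_prod_eq_sum: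
  assumes "v \<in> {1..V}" "a \<in> carrier_vec (3 * dTE + dPE)"
  shows "u v \<bullet> a = (\<Sum>c<dTE. u v $ c * a $ c)"
proof -
  have "u v \<bullet> a = (\<Sum>c\<in>{0..<3 * dTE + dPE}. u v $ c * a $ c)"
    using assms by (simp add: scalar_prod_def)
  also have "\<dots> = (\<Sum>c\<in>{0..<dTE}. u v $ c * a $ c)"
    using assms u_vanishes by (intro sum.mono_neutral_right) auto
  finally show ?thesis
    by (simp add: atLeast0LessThan)
qed

lemma token_scalar_prod_mixture:
  assumes "v \<in> {1..V}"
  shows "u v \<bullet> mixture lam = lam v"
proof -
  have "u v \<bullet> mixture lam = (\<Sum>w=1..V. lam w * (\<Sum>c<dTE. u v $ c * u w $ c))"
    using assms by (simp add: token_scalar_prod_eq_sum mixture_def sum_distrib_left sum.swap[of _ "{..<dTE}"]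
        algebra_simps)
  also have "\<dots> = (\<Sum>w=1..V. if v = w then lam w else 0)"
    using assms u_orthonormal by (intro sum.cong) auto
  also have "\<dots> = lam v"
    using assms by simp
  finally show ?thesis .
qed

lemma token_sum_scalar_prod:
  assumes "S \<subseteq> {1..V}" "a \<in> carrier_vec (3 * dTE + dPE)"
  shows "token_sum S \<bullet> a = (\<Sum>v\<in>S. u v \<bullet> a)"
  using assms u_carrier
  by (auto simp: token_sum_def scalar_prod_def sum_distrib_right intro: sum.swap)

lemma token_sum_scalar_prod_mixture_plus_pos_enc:
  assumes "S \<subseteq> {1..V}"
  shows "token_sum S \<bullet> (mixture lam + pos_enc dTE dPE M i) = (\<Sum>v\<in>S. lam v)"
proof -
  have "u v \<bullet> (mixture lam + pos_enc dTE dPE M i) = lam v" if "v \<in> S" for v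
  proof -
    have v: "v \<in> {1..V}"
      using that assms by blast
    then have "u v \<bullet> (mixture lam + pos_enc dTE dPE M i) = u v \<bullet> mixture lam + u v \<bullet> pos_enc dTE dPE M i"
      using u_carrier by (intro scalar_prod_add_distrib) auto
    also have "u v \<bullet> pos_enc dTE dPE M i = 0"
      using v by (simp add: token_scalar_prod_eq_sum pos_enc_token_coord)
    finally show ?thesis
      using v by (simp add: token_scalar_prod_mixture)
  qed
  then show ?thesis
    using assms by (simp add: token_sum_scalar_prod)
qed

lemma attention_score:
  assumes "even dPE" "0 < dPE" "S \<subseteq> {1..V}"
  shows "(query_mat (2 * dPE) (3 * dTE + dPE) (token_sum S) B g (1 / real M) (real l / real M)
            *\<^sub>v (mixture lam + pos_enc dTE dPE M i))
         \<bullet> (key_mat (2 * dPE) (3 * dTE + dPE) *\<^sub>v (mixture lam' + pos_enc dTE dPE M j))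
       = B * (\<Sum>v\<in>S. lam v) * cos ((real j - 1) / real M)
         + g * cos ((real i - real l - real j) / real M)"
proof -
  have "2 \<le> dPE"
    using assms(1,2) by presburger
  then have coords: "(mixture lam'' + pos_enc dTE dPE M k) $ (3 * dTE + dPE - 2) = cos (real k / real M)"
    "(mixture lam'' + pos_enc dTE dPE M k) $ (3 * dTE + dPE - 1) = sin (real k / real M)" for lam'' k
    using mixture_vanishes pos_enc_lowest_frequency[OF assms(1,2)] by simp_all
  have car: "mixture lam'' + pos_enc dTE dPE M k \<in> carrier_vec (3 * dTE + dPE)" for lam'' k
    by (intro add_carrier_vec mixture_carrier pos_enc_carrier)
  have "(query_mat (2 * dPE) (3 * dTE + dPE) (token_sum S) B g (1 / real M) (real l / real M)
            *\<^sub>v (mixture lam + pos_enc dTE dPE M i))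
         \<bullet> (key_mat (2 * dPE) (3 * dTE + dPE) *\<^sub>v (mixture lam' + pos_enc dTE dPE M j))
       = B * (token_sum S \<bullet> (mixture lam + pos_enc dTE dPE M i)) * cos (real j / real M - 1 / real M)
         + g * cos (real i / real M - real l / real M - real j / real M)"
    using \<open>2 \<le> dPE\<close>
    by (intro query_key_scalar_prod[OF _ _ token_sum_carrier car car coords coords]) linarith+
  then show ?thesis
    using assms(3) by (simp add: token_sum_scalar_prod_mixture_plus_pos_enc diff_divide_distrib)
qed

end

lemma (in token_embedding) attention_SoftMax_peak:
  fixes h :: "nat \<Rightarrow> real vec" and lam :: "nat \<Rightarrow> real"
    and M x l i T :: nat and B g \<delta> L eps :: real
  defines "\<theta> \<equiv> 1 / real M"
  defines "s \<equiv> \<lambda>j. (query_mat (2 * dPE) (3 * dTE + dPE) (token_sum ({1..V} - {x})) B g \<theta> (real l * \<theta>)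
                    *\<^sub>v (h i + pos_enc dTE dPE M i))
              \<bullet> (key_mat (2 * dPE) (3 * dTE + dPE) *\<^sub>v (h j + pos_enc dTE dPE M j))"
  assumes dPE: "even dPE" "0 < dPE" and x: "x \<in> {1..V}" and i: "i \<in> {1..T}"
    and gap: "cos_gap T \<theta> \<delta>" and "0 < \<delta>"
    and params: "real T * exp (- L) < eps" "0 \<le> g" "g * \<delta> = L" "0 \<le> B" "B * \<delta> = L + 2 * g"
    and mixtures: "\<forall>j\<in>{1..i}. \<exists>lam'. h j = mixture lam'"
    and lam: "\<forall>v\<in>{1..V}. 0 \<le> lam v" "(\<Sum>v=1..V. (lam v)\<^sup>2) = 1" "h i = mixture lam"
    and dichotomy: "lam x = 1 \<and> l < i \<or> lam x = 0"
  shows "if lam x = 1 then 1 - eps < SoftMax s i (i - l) else 1 - eps < SoftMax s i 1"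
proof -
  have score: "\<forall>j\<in>{1..i}. s j = B * (\<Sum>v\<in>{1..V} - {x}. lam v) * cos ((real j - 1) * \<theta>)
      + g * cos ((real i - real l - real j) * \<theta>)"
  proof
    fix j assume "j \<in> {1..i}"
    then obtain lam' where "h j = mixture lam'"
      using mixtures by blast
    then show "s j = B * (\<Sum>v\<in>{1..V} - {x}. lam v) * cos ((real j - 1) * \<theta>)
      + g * cos ((real i - real l - real j) * \<theta>)"
      unfolding s_def \<theta>_def using lam(3) dPE by (simp add: attention_score)
  qed
  from dichotomy show ?thesis
  proof
    assume "lam x = 1 \<and> l < i"
    moreover have "(\<Sum>v\<in>{1..V} - {x}. lam v) = 0"
      using sum_others_of_sum_squares_eq_1(1)[of "{1..V}" x lam] x lam \<open>lam x = 1 \<and> l < i\<close> by simp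
    ultimately show ?thesis
      using SoftMax_peak_at_shift[OF gap params(2,3,1) _ _ score] i by simp
  next
    assume "lam x = 0"
    moreover have "1 \<le> (\<Sum>v\<in>{1..V} - {x}. lam v)"
      using sum_others_of_sum_squares_eq_1(2)[of "{1..V}" x lam] x lam \<open>lam x = 0\<close> by simp
    ultimately show ?thesis
      using SoftMax_peak_at_first[OF gap \<open>0 < \<delta>\<close> params(2,4,5,1) i score] by simp
  qed
qed

theorem lemma3:
  fixes V dTE dPE M :: nat and u :: "nat \<Rightarrow> real vec"
    and x l T :: nat and eps :: real
  assumes "even dPE" and "dPE > 0" and "M > 0"
    and "\<forall>v\<in>{1..V}. u v \<in> carrier_vec (3*dTE+dPE)"
    and "\<forall>v\<in>{1..V}. \<forall>c. dTE \<le> c \<and> c < 3*dTE+dPE \<longrightarrow> u v $ c = 0"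
    and "\<forall>v\<in>{1..V}. \<forall>w\<in>{1..V}. (\<Sum>c<dTE. u v $ c * u w $ c) = (if v = w then 1 else 0)"
    and "x \<in> {1..V}" and "T \<ge> 1" and "0 < eps" and "eps < 1"
  shows "\<exists>K Q. K \<in> carrier_mat (2*dPE) (3*dTE+dPE) \<and> Q \<in> carrier_mat (2*dPE) (3*dTE+dPE) \<and>
    (\<forall>h :: nat \<Rightarrow> real vec.
       (\<forall>i\<in>{1..T}. \<exists>lam :: nat \<Rightarrow> real. (\<forall>v\<in>{1..V}. lam v \<ge> 0) \<and> (\<Sum>v=1..V. (lam v)^2) = 1
            \<and> h i = vec (3*dTE+dPE) (\<lambda>c. \<Sum>v=1..V. lam v * u v $ c))
       \<and> (\<forall>i\<in>{1..T}. u x \<bullet> h i \<in> {0, 1})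
       \<and> (\<forall>i\<in>{1..T}. i \<le> l \<longrightarrow> u x \<bullet> h i = 0)
       \<longrightarrow> (\<forall>i\<in>{1..T}.
             (let p = pos_enc dTE dPE M;
                  s = (\<lambda>j. (Q *\<^sub>v (h i + p i)) \<bullet> (K *\<^sub>v (h j + p j)))
              in if h i \<bullet> u x = 1 then SoftMax s i (i - l) > 1 - eps
                 else SoftMax s i 1 > 1 - eps)))"
proof -
  interpret token_embedding V dTE dPE u
    using assms(4-6) by unfold_locales
  obtain \<delta> where "0 < \<delta>" and gap: "cos_gap T (1 / real M) \<delta>"
    using exists_cos_gap[of "1 / real M" T] assms(3) by auto
  then obtain L g B where params: "real T * exp (- L) < eps" "0 \<le> g" "g * \<delta> = L" "0 \<le> B" "B * \<delta> = L + 2 * g"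
    using exists_SoftMax_margin_params assms(8-10) by blast
  show ?thesis
  proof (intro exI conjI allI impI ballI)
    fix h :: "nat \<Rightarrow> real vec" and i
    assume H: "(\<forall>i\<in>{1..T}. \<exists>lam. (\<forall>v\<in>{1..V}. 0 \<le> lam v) \<and> (\<Sum>v=1..V. (lam v)\<^sup>2) = 1
            \<and> h i = vec (3 * dTE + dPE) (\<lambda>c. \<Sum>v=1..V. lam v * u v $ c))
       \<and> (\<forall>i\<in>{1..T}. u x \<bullet> h i \<in> {0, 1}) \<and> (\<forall>i\<in>{1..T}. i \<le> l \<longrightarrow> u x \<bullet> h i = 0)"
      and i: "i \<in> {1..T}"
    then obtain lam where lam: "\<forall>v\<in>{1..V}. 0 \<le> lam v" "(\<Sum>v=1..V. (lam v)\<^sup>2) = 1" "h i = mixture lam"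
      unfolding mixture_def by blast
    have mixtures: "\<forall>j\<in>{1..i}. \<exists>lam'. h j = mixture lam'"
    proof
      fix j assume "j \<in> {1..i}"
      with i have "j \<in> {1..T}"
        by simp
      with H show "\<exists>lam'. h j = mixture lam'"
        unfolding mixture_def by blast
    qed
    have weight: "u x \<bullet> h i = lam x" "h i \<bullet> u x = lam x"
      using lam(3) assms(4,7) by (simp_all add: token_scalar_prod_mixture comm_scalar_prod[of _ "3 * dTE + dPE"])
    moreover have "u x \<bullet> h i \<in> {0, 1}" "i \<le> l \<longrightarrow> u x \<bullet> h i = 0"
      using H i by blast+
    ultimately have "lam x = 1 \<and> l < i \<or> lam x = 0"
      by auto
    from attention_SoftMax_peak[OF assms(1,2,7) i gap \<open>0 < \<delta>\<close> params mixtures lam this]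
    show "let p = pos_enc dTE dPE M;
        s = (\<lambda>j. (query_mat (2 * dPE) (3 * dTE + dPE) (token_sum ({1..V} - {x})) B g (1 / real M) (real l * (1 / real M))
                  *\<^sub>v (h i + p i)) \<bullet> (key_mat (2 * dPE) (3 * dTE + dPE) *\<^sub>v (h j + p j)))
      in if h i \<bullet> u x = 1 then 1 - eps < SoftMax s i (i - l) else 1 - eps < SoftMax s i 1"
      unfolding Let_def weight(2) .
  qed (simp_all add: key_mat_def query_mat_def)
qed

end
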